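(* Let $U\subseteq\mathbb{R}^4$ be open and let $f:U\to\mathbb{H}$ be a smooth diffeomorphism onto an open set that maps every line segment contained in $U$ onto an arc of a round circle or a line segment in $\mathbb{H}=\mathbb{R}^4$. Write $A_\alpha=\partial_\alpha f$ and suppose there is a smooth quaternion-valued 1-form $B$ on $U$ with $\partial_\alpha A_\alpha=B_\alpha A_\alpha$ for all constant vector fields $\alpha$. Let $C:U\to\mathbb{H}$ be the function such that $$\partial_\alpha B_\beta-\tfrac12 B_\alpha B_\beta=\tfrac13\,C\,\bigl(\overline{A_\alpha}A_\beta+\overline{A_\beta}A_\alpha+A_\alpha\overline{A_\beta}\bigr)$$ for all $\alpha,\beta$ (equivalently, $\partial_\alpha B_\alpha-\tfrac12B_\alpha^2=C|A_\alpha|^2$). Then $C$ is real-valued.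
   Context: $\mathbb{R}^4$ is identified with the quaternions $\mathbb{H}$; for a constant vector field $\alpha$, $\partial_\alpha$ is the directional derivative along $\alpha$; a quaternion-valued 1-form $B$ assigns to each point an $\mathbb{R}$-linear map $\alpha\mapsto B_\alpha\in\mathbb{H}$. Products are quaternion products, $\bar{\cdot}$ is conjugation, $|\cdot|$ the norm. *)

theory Defs
  imports "HOL-Analysis.Analysis"
begin

text \<open>Quaternions H are identified with real^4: component 1 is the real part,
  components 2,3,4 the i, j, k parts.\<close>

type_synonym quat = "real ^ 4"

definition qre :: "quat \<Rightarrow> real" where "qre p = p $ 1"
definition qi  :: "quat \<Rightarrow> real" where "qi p = p $ 2"
definition qj  :: "quat \<Rightarrow> real" where "qj p = p $ 3"
definition qk  :: "quat \<Rightarrow> real" where "qk p = p $ 4"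

definition qmk :: "real \<Rightarrow> real \<Rightarrow> real \<Rightarrow> real \<Rightarrow> quat" where
  "qmk a b c d = (\<chi> i. if i = 1 then a else if i = 2 then b else if i = 3 then c else d)"

definition qmult :: "quat \<Rightarrow> quat \<Rightarrow> quat" (infixl "\<star>" 70) where
  "p \<star> q = qmk
     (qre p * qre q - qi p * qi q - qj p * qj q - qk p * qk q)
     (qre p * qi q + qi p * qre q + qj p * qk q - qk p * qj q)
     (qre p * qj q - qi p * qk q + qj p * qre q + qk p * qi q)
     (qre p * qk q + qi p * qj q - qj p * qi q + qk p * qre q)"

definition qconj :: "quat \<Rightarrow> quat" where
  "qconj p = qmk (qre p) (- qi p) (- qj p) (- qk p)"

definition quat_is_real :: "quat \<Rightarrow> bool" where
  "quat_is_real p \<longleftrightarrow> qi p = 0 \<and> qj p = 0 \<and> qk p = 0"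

definition dderiv :: "('a::real_normed_vector \<Rightarrow> 'b::real_normed_vector) \<Rightarrow> 'a \<Rightarrow> 'a \<Rightarrow> 'b" where
  "dderiv g v x = frechet_derivative g (at x) v"

text \<open>C^k on a set: differentiable, and all directional derivatives are C^(k-1)
  (for open sets in finite dimensions this is the usual C^k).\<close>
fun Ck_on :: "nat \<Rightarrow> 'a set \<Rightarrow> ('a::euclidean_space \<Rightarrow> 'b::real_normed_vector) \<Rightarrow> bool" where
  "Ck_on 0 U g = continuous_on U g"
| "Ck_on (Suc k) U g = (g differentiable_on U \<and> (\<forall>v. Ck_on k U (\<lambda>x. dderiv g v x)))"

definition smooth_on :: "'a set \<Rightarrow> ('a::euclidean_space \<Rightarrow> 'b::real_normed_vector) \<Rightarrow> bool" where
  "smooth_on U g \<longleftrightarrow> (\<forall>k. Ck_on k U g)"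

definition smooth_diffeo_onto_open :: "quat set \<Rightarrow> (quat \<Rightarrow> quat) \<Rightarrow> bool" where
  "smooth_diffeo_onto_open U f \<longleftrightarrow>
     smooth_on U f \<and> inj_on f U \<and> open (f ` U) \<and>
     (\<exists>g. smooth_on (f ` U) g \<and> (\<forall>x\<in>U. g (f x) = x))"

definition round_circle :: "quat set \<Rightarrow> bool" where
  "round_circle S \<longleftrightarrow> (\<exists>c u v. u \<bullet> v = 0 \<and> norm u = norm v \<and> norm u > 0 \<and>
      S = range (\<lambda>t. c + cos t *\<^sub>R u + sin t *\<^sub>R v))"

definition straight_line :: "quat set \<Rightarrow> bool" where
  "straight_line S \<longleftrightarrow> (\<exists>p d. d \<noteq> 0 \<and> S = range (\<lambda>t. p + t *\<^sub>R d))"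

text \<open>Every segment in U is mapped onto an arc of a round circle or onto a line segment.
  (The image of a segment under a continuous injective map is an arc, so it is an arc of a
  circle / a segment iff it is contained in a circle / a line.)\<close>
definition maps_segments_to_circles :: "quat set \<Rightarrow> (quat \<Rightarrow> quat) \<Rightarrow> bool" where
  "maps_segments_to_circles U f \<longleftrightarrow>
     (\<forall>a b. closed_segment a b \<subseteq> U \<longrightarrow>
        (\<exists>S. (round_circle S \<or> straight_line S) \<and> f ` closed_segment a b \<subseteq> S))"

end

theory Submission
  imports Defs
begin

(* Fix x with A = A_alpha(x) nonzero and put B = B_alpha(x), dB = d_alpha B_alpha(x). The curve
   gamma(t) = f(x + t alpha) has gamma' = A, gamma'' = B A and gamma''' = (dB + B^2) A at t = 0.
   It runs in a circle with centre c (or in a line), so these three vectors lie in the plane of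
   the circle, and differentiating |gamma - c|^2 = const fixes their components along the radius
   p = gamma - c. Expanding in the orthogonal basis p, A of the plane and writing q = p A^-1,
   which is purely imaginary because p is orthogonal to A, one gets B = t + s q and
   dB + B^2 = g + 3 t s q with s, t, g real (s = 0 for a line). Hence
   dB - B^2/2 = g - 3 t^2/2 - (3/2) s^2 q^2 is real, and it equals |A|^2 C by the hypothesis
   with alpha = beta. *)

lemma quat_components_qmk [simp]:
  "qre (qmk a b c d) = a" "qi (qmk a b c d) = b" "qj (qmk a b c d) = c" "qk (qmk a b c d) = d"
  by (simp_all add: qre_def qi_def qj_def qk_def qmk_def)

lemma quat_eq_iff: "p = q \<longleftrightarrow> qre p = qre q \<and> qi p = qi q \<and> qj p = qj q \<and> qk p = qk q"
  by (auto simp: vec_eq_iff forall_4 qre_def qi_def qj_def qk_def)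

lemma quat_components_linear [simp]:
  "qre (p + q) = qre p + qre q" "qi (p + q) = qi p + qi q"
  "qj (p + q) = qj p + qj q" "qk (p + q) = qk p + qk q"
  "qre (p - q) = qre p - qre q" "qi (p - q) = qi p - qi q"
  "qj (p - q) = qj p - qj q" "qk (p - q) = qk p - qk q"
  "qre (r *\<^sub>R p) = r * qre p" "qi (r *\<^sub>R p) = r * qi p"
  "qj (r *\<^sub>R p) = r * qj p" "qk (r *\<^sub>R p) = r * qk p"
  by (simp_all add: qre_def qi_def qj_def qk_def)

lemma quat_components_qmult [simp]:
  "qre (p \<star> q) = qre p * qre q - qi p * qi q - qj p * qj q - qk p * qk q"
  "qi (p \<star> q) = qre p * qi q + qi p * qre q + qj p * qk q - qk p * qj q"
  "qj (p \<star> q) = qre p * qj q - qi p * qk q + qj p * qre q + qk p * qi q"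
  "qk (p \<star> q) = qre p * qk q + qi p * qj q - qj p * qi q + qk p * qre q"
  by (simp_all add: qmult_def)

lemma quat_components_qconj [simp]:
  "qre (qconj p) = qre p" "qi (qconj p) = - qi p" "qj (qconj p) = - qj p" "qk (qconj p) = - qk p"
  by (simp_all add: qconj_def)

lemma quat_inner: "p \<bullet> q = qre p * qre q + qi p * qi q + qj p * qj q + qk p * qk q"
  by (simp add: inner_vec_def sum_4 qre_def qi_def qj_def qk_def)

lemma qmult_assoc: "p \<star> q \<star> r = p \<star> (q \<star> r)"
  by (simp add: quat_eq_iff algebra_simps)

lemma qmult_add_left: "(p + q) \<star> r = p \<star> r + q \<star> r"
  and qmult_scaleR_left: "(c *\<^sub>R p) \<star> r = c *\<^sub>R (p \<star> r)"
  and qmult_real_left: "qmk c 0 0 0 \<star> r = c *\<^sub>R r"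
  by (simp_all add: quat_eq_iff algebra_simps)

lemma bounded_bilinear_qmult: "bounded_bilinear (\<star>)"
proof -
  have "bilinear (\<star>)"
    unfolding bilinear_def by (auto intro!: linearI simp: quat_eq_iff algebra_simps)
  then show ?thesis
    using bilinear_conv_bounded_bilinear by blast
qed

lemma qmult_qconj_qmult_right: "p \<star> qconj a \<star> a = (a \<bullet> a) *\<^sub>R p"
  and qmult_qmult_qconj_right: "p \<star> a \<star> qconj a = (a \<bullet> a) *\<^sub>R p"
  by (simp_all add: quat_eq_iff quat_inner algebra_simps)

lemma qmult_right_cancel:
  assumes "p \<star> a = q \<star> a" and "a \<noteq> 0"
  shows "p = q"
proof -
  have "(a \<bullet> a) *\<^sub>R p = (a \<bullet> a) *\<^sub>R q"
    using assms(1) by (metis qmult_qmult_qconj_right)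
  then show ?thesis
    using assms(2) by simp
qed

lemma qconj_symmetrization_diagonal:
  "(1/3) *\<^sub>R (c \<star> (qconj a \<star> a + qconj a \<star> a + a \<star> qconj a)) = (a \<bullet> a) *\<^sub>R c"
  by (simp only: quat_eq_iff quat_components_linear quat_components_qmult quat_components_qconj
      quat_inner) (simp add: algebra_simps)

lemma quat_is_real_Schwarzian_form:
  fixes a p b D :: quat
  assumes "a \<noteq> 0" and "p \<bullet> a = 0"
    and b: "b \<star> a = s *\<^sub>R p + t *\<^sub>R a"
    and D: "D \<star> a = (3 * t * s) *\<^sub>R p + g *\<^sub>R a"
  shows "quat_is_real (D - (3/2) *\<^sub>R (b \<star> b))"
proof -
  define q where "q = (1 / (a \<bullet> a)) *\<^sub>R (p \<star> qconj a)"
  have qa: "q \<star> a = p"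
    using assms(1) by (simp add: q_def qmult_scaleR_left qmult_qconj_qmult_right)
  have q_imaginary: "qre q = 0"
    using assms(2) by (simp add: q_def quat_inner)
  have "b = qmk t 0 0 0 + s *\<^sub>R q"
    using assms(1) by (rule qmult_right_cancel[rotated])
      (simp add: b qmult_add_left qmult_real_left qmult_scaleR_left qa)
  moreover have "D = qmk g 0 0 0 + (3 * t * s) *\<^sub>R q"
    using assms(1) by (rule qmult_right_cancel[rotated])
      (simp add: D qmult_add_left qmult_real_left qmult_scaleR_left qa)
  ultimately show ?thesis
    using q_imaginary by (simp add: quat_is_real_def algebra_simps)
qed

lemma span_orthogonal_pair_decomposition:
  fixes p a z u v :: "'a::euclidean_space"
  assumes "p \<in> span {u, v}" "a \<in> span {u, v}" "z \<in> span {u, v}"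
    and "p \<bullet> a = 0" "p \<noteq> 0" "a \<noteq> 0"
  shows "z = (z \<bullet> p / (p \<bullet> p)) *\<^sub>R p + (z \<bullet> a / (a \<bullet> a)) *\<^sub>R a"
proof -
  have "p \<noteq> a"
    using assms(4,5) by auto
  have "independent {p, a}"
    using assms(4-6) by (intro pairwise_orthogonal_independent)
      (auto simp: pairwise_def orthogonal_def inner_commute)
  moreover have "dim (span {u, v}) \<le> card {p, a}"
  proof -
    have "dim (span {u, v}) \<le> card {u, v}"
      by (simp add: dim_le_card')
    also have "\<dots> \<le> 2"
      by (cases "u = v") auto
    finally show ?thesis
      using \<open>p \<noteq> a\<close> by simp
  qed
  ultimately have "span {u, v} \<subseteq> span {p, a}"
    using assms(1,2) card_ge_dim_independent[of "{p, a}" "span {u, v}"] by auto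
  with assms(3) have "z \<in> span {p, a}"
    by blast
  then obtain x y where z: "z = x *\<^sub>R p + y *\<^sub>R a"
    by (auto simp: span_breakdown_eq span_singleton algebra_simps)
  show ?thesis
    using assms(4-6) by (simp add: z inner_add_left inner_add_right inner_commute)
qed

lemma round_circle_in_span_and_sphere:
  assumes "round_circle S"
  obtains c u v :: quat and r and L :: "quat \<Rightarrow> quat"
  where "linear L" "\<And>z. L z = 0 \<Longrightarrow> z \<in> span {u, v}" "r > 0"
    "\<And>y. y \<in> S \<Longrightarrow> L (y - c) = 0" "\<And>y. y \<in> S \<Longrightarrow> (y - c) \<bullet> (y - c) = r"
proof -
  obtain c u v where uv: "u \<bullet> v = 0" "norm u = norm v" "norm u > 0"
    and S: "S = range (\<lambda>t. c + cos t *\<^sub>R u + sin t *\<^sub>R v)"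
    using assms unfolding round_circle_def by blast
  define r where "r = u \<bullet> u"
  have r: "r > 0" "u \<bullet> u = r" "v \<bullet> v = r" "v \<bullet> u = 0"
    using uv by (simp_all add: r_def dot_square_norm inner_commute)
  define L where "L z = z - (z \<bullet> u / r) *\<^sub>R u - (z \<bullet> v / r) *\<^sub>R v" for z
  have "linear L"
    by (rule linearI) (simp_all add: L_def algebra_simps add_divide_distrib)
  moreover have "z \<in> span {u, v}" if "L z = 0" for z
  proof -
    have "z = (z \<bullet> u / r) *\<^sub>R u + (z \<bullet> v / r) *\<^sub>R v"
      using that by (simp add: L_def algebra_simps)
    then show ?thesis
      by (metis span_add span_base span_scale insertI1 insertI2)
  qed
  moreover have "L (y - c) = 0 \<and> (y - c) \<bullet> (y - c) = r" if "y \<in> S" for y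
  proof -
    obtain \<theta> where y: "y - c = cos \<theta> *\<^sub>R u + sin \<theta> *\<^sub>R v"
      using \<open>y \<in> S\<close> S by auto
    have "(y - c) \<bullet> (y - c) = r * (cos \<theta> * cos \<theta>) + r * (sin \<theta> * sin \<theta>)"
      by (simp add: y uv r algebra_simps)
    also have "\<dots> = r"
      by (simp flip: distrib_left power2_eq_square)
    finally show ?thesis
      using r by (simp add: y L_def inner_add_left uv)
  qed
  ultimately show ?thesis
    using that r(1) by blast
qed

lemma straight_line_in_span:
  assumes "straight_line S"
  obtains c d :: quat and L :: "quat \<Rightarrow> quat"
  where "linear L" "\<And>z. L z = 0 \<Longrightarrow> z \<in> span {d}" "\<And>y. y \<in> S \<Longrightarrow> L (y - c) = 0"
proof -
  obtain c d where "d \<noteq> 0" and S: "S = range (\<lambda>t. c + t *\<^sub>R d)"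
    using assms unfolding straight_line_def by blast
  define L where "L z = z - (z \<bullet> d / (d \<bullet> d)) *\<^sub>R d" for z
  have "linear L"
    by (rule linearI) (simp_all add: L_def algebra_simps add_divide_distrib)
  moreover have "z \<in> span {d}" if "L z = 0" for z
    using that by (simp add: L_def span_singleton)
  moreover have "L (y - c) = 0" if "y \<in> S" for y
    using that \<open>d \<noteq> 0\<close> by (auto simp: S L_def)
  ultimately show ?thesis
    using that by blast
qed

lemma has_vector_derivative_zero_if_constant_on:
  assumes "open T" "t \<in> T" "\<And>s. s \<in> T \<Longrightarrow> \<phi> s = k" "(\<phi> has_vector_derivative \<phi>') (at t)"
  shows "\<phi>' = 0"
proof -
  have "(\<phi> has_vector_derivative 0) (at t)"
    using has_vector_derivative_const assms(1,2)
    by (rule has_vector_derivative_transform_within_open) (simp add: assms(3))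
  then show ?thesis
    using assms(4) vector_derivative_unique_at by blast
qed

lemma linear_vanishes_on_curve_derivatives:
  fixes \<gamma> \<gamma>1 \<gamma>2 :: "real \<Rightarrow> 'a::euclidean_space" and L :: "'a \<Rightarrow> 'b::real_normed_vector"
  assumes T: "open T" "0 \<in> T"
    and d1: "\<And>t. t \<in> T \<Longrightarrow> (\<gamma> has_vector_derivative \<gamma>1 t) (at t)"
    and d2: "\<And>t. t \<in> T \<Longrightarrow> (\<gamma>1 has_vector_derivative \<gamma>2 t) (at t)"
    and d3: "(\<gamma>2 has_vector_derivative \<gamma>3) (at 0)"
    and "linear L" and L\<gamma>: "\<And>t. t \<in> T \<Longrightarrow> L (\<gamma> t - c) = 0"
  shows "L (\<gamma>1 0) = 0" "L (\<gamma>2 0) = 0" "L \<gamma>3 = 0"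
proof -
  have "bounded_linear L"
    using \<open>linear L\<close> linear_conv_bounded_linear by blast
  note L_derivative = bounded_linear.has_vector_derivative[OF this]
  have L\<gamma>1: "L (\<gamma>1 t) = 0" if "t \<in> T" for t
  proof -
    have "((\<lambda>t. \<gamma> t - c) has_vector_derivative \<gamma>1 t) (at t)"
      using d1[OF that] by (simp add: has_vector_derivative_diff_const)
    from has_vector_derivative_zero_if_constant_on[OF T(1) that L\<gamma> L_derivative[OF this]]
    show ?thesis .
  qed
  have L\<gamma>2: "L (\<gamma>2 t) = 0" if "t \<in> T" for t
    using T(1) that L\<gamma>1 L_derivative[OF d2[OF that]]
    by (rule has_vector_derivative_zero_if_constant_on)
  show "L (\<gamma>1 0) = 0" "L (\<gamma>2 0) = 0" "L \<gamma>3 = 0"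
    using L\<gamma>1 L\<gamma>2 T has_vector_derivative_zero_if_constant_on[OF T L\<gamma>2 L_derivative[OF d3]] by auto
qed

lemma curve_on_sphere_derivatives:
  fixes \<gamma> \<gamma>1 \<gamma>2 :: "real \<Rightarrow> 'a::real_inner"
  assumes T: "open T" "0 \<in> T"
    and d1: "\<And>t. t \<in> T \<Longrightarrow> (\<gamma> has_vector_derivative \<gamma>1 t) (at t)"
    and d2: "\<And>t. t \<in> T \<Longrightarrow> (\<gamma>1 has_vector_derivative \<gamma>2 t) (at t)"
    and d3: "(\<gamma>2 has_vector_derivative \<gamma>3) (at 0)"
    and sphere: "\<And>t. t \<in> T \<Longrightarrow> (\<gamma> t - c) \<bullet> (\<gamma> t - c) = r"
  shows "(\<gamma> 0 - c) \<bullet> \<gamma>1 0 = 0"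
    "\<gamma>1 0 \<bullet> \<gamma>1 0 + (\<gamma> 0 - c) \<bullet> \<gamma>2 0 = 0"
    "3 * (\<gamma>1 0 \<bullet> \<gamma>2 0) + (\<gamma> 0 - c) \<bullet> \<gamma>3 = 0"
proof -
  note inner_derivative = bounded_bilinear.has_vector_derivative[OF bounded_bilinear_inner]
  have d0: "((\<lambda>t. \<gamma> t - c) has_vector_derivative \<gamma>1 t) (at t)" if "t \<in> T" for t
    using d1[OF that] by (simp add: has_vector_derivative_diff_const)
  have first: "(\<gamma> t - c) \<bullet> \<gamma>1 t = 0" if "t \<in> T" for t
  proof -
    from has_vector_derivative_zero_if_constant_on[OF T(1) that sphere
        inner_derivative[OF d0[OF that] d0[OF that]]]
    show ?thesis
      by (simp add: inner_commute)
  qed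
  have second: "\<gamma>1 t \<bullet> \<gamma>1 t + (\<gamma> t - c) \<bullet> \<gamma>2 t = 0" if "t \<in> T" for t
  proof -
    from has_vector_derivative_zero_if_constant_on[OF T(1) that first
        inner_derivative[OF d0[OF that] d2[OF that]]]
    show ?thesis
      by simp
  qed
  have "((\<lambda>t. \<gamma>1 t \<bullet> \<gamma>1 t + (\<gamma> t - c) \<bullet> \<gamma>2 t) has_vector_derivative
      (\<gamma>1 0 \<bullet> \<gamma>2 0 + \<gamma>2 0 \<bullet> \<gamma>1 0) + ((\<gamma> 0 - c) \<bullet> \<gamma>3 + \<gamma>1 0 \<bullet> \<gamma>2 0)) (at 0)"
    by (intro has_vector_derivative_add inner_derivative d2 d0 d3 T(2))
  from has_vector_derivative_zero_if_constant_on[OF T second this]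
  show "3 * (\<gamma>1 0 \<bullet> \<gamma>2 0) + (\<gamma> 0 - c) \<bullet> \<gamma>3 = 0"
    by (simp add: inner_commute)
  show "(\<gamma> 0 - c) \<bullet> \<gamma>1 0 = 0" "\<gamma>1 0 \<bullet> \<gamma>1 0 + (\<gamma> 0 - c) \<bullet> \<gamma>2 0 = 0"
    using first second T(2) by auto
qed

lemma quat_is_real_Schwarzian_form_circle:
  fixes a b D p u v :: quat
  assumes "{p, a, b \<star> a, D \<star> a} \<subseteq> span {u, v}" "p \<noteq> 0" "a \<noteq> 0" "p \<bullet> a = 0"
    and second: "a \<bullet> a + p \<bullet> (b \<star> a) = 0"
    and third: "3 * (a \<bullet> (b \<star> a)) + p \<bullet> (D \<star> a) = 0"
  shows "quat_is_real (D - (3/2) *\<^sub>R (b \<star> b))"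
proof -
  have decompose: "z = (z \<bullet> p / (p \<bullet> p)) *\<^sub>R p + (z \<bullet> a / (a \<bullet> a)) *\<^sub>R a"
    if "z \<in> {b \<star> a, D \<star> a}" for z
    using assms(1-4) that by (intro span_orthogonal_pair_decomposition) auto
  define s where "s = - (a \<bullet> a) / (p \<bullet> p)"
  define t where "t = (b \<star> a) \<bullet> a / (a \<bullet> a)"
  have "(b \<star> a) \<bullet> p = - (a \<bullet> a)"
    using second by (simp add: inner_commute)
  then have "b \<star> a = s *\<^sub>R p + t *\<^sub>R a"
    using decompose[of "b \<star> a"] by (simp add: s_def t_def)
  moreover have "(D \<star> a) \<bullet> p = - 3 * ((b \<star> a) \<bullet> a)"
    using third by (simp add: inner_commute)
  then have "(D \<star> a) \<bullet> p / (p \<bullet> p) = 3 * t * s"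
    using \<open>a \<noteq> 0\<close> by (simp add: s_def t_def)
  then have "D \<star> a = (3 * t * s) *\<^sub>R p + ((D \<star> a) \<bullet> a / (a \<bullet> a)) *\<^sub>R a"
    using decompose[of "D \<star> a"] by simp
  ultimately show ?thesis
    by (rule quat_is_real_Schwarzian_form[OF assms(3,4)])
qed

lemma quat_is_real_Schwarzian_form_line:
  fixes a b D d :: quat
  assumes "{a, b \<star> a, D \<star> a} \<subseteq> span {d}" "a \<noteq> 0"
  shows "quat_is_real (D - (3/2) *\<^sub>R (b \<star> b))"
proof -
  obtain k where a: "a = k *\<^sub>R d" and "k \<noteq> 0"
    using assms by (auto simp: span_singleton)
  have multiple_of_a: "\<exists>t. z = t *\<^sub>R a" if z: "z \<in> span {d}" for z
  proof -
    obtain m where "z = m *\<^sub>R d"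
      using z by (auto simp: span_singleton)
    then have "z = (m / k) *\<^sub>R a"
      using \<open>k \<noteq> 0\<close> by (simp add: a)
    then show ?thesis ..
  qed
  obtain t g where "b \<star> a = t *\<^sub>R a" "D \<star> a = g *\<^sub>R a"
    using multiple_of_a assms(1) by (meson insert_subset)
  with \<open>a \<noteq> 0\<close> show ?thesis
    using quat_is_real_Schwarzian_form[of a 0 b 0 t D g] by simp
qed

lemma quat_is_real_Schwarzian_form_of_curve:
  fixes \<gamma> \<gamma>1 \<gamma>2 :: "real \<Rightarrow> quat"
  assumes T: "open T" "0 \<in> T"
    and d1: "\<And>t. t \<in> T \<Longrightarrow> (\<gamma> has_vector_derivative \<gamma>1 t) (at t)"
    and d2: "\<And>t. t \<in> T \<Longrightarrow> (\<gamma>1 has_vector_derivative \<gamma>2 t) (at t)"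
    and d3: "(\<gamma>2 has_vector_derivative D \<star> a) (at 0)"
    and "\<gamma>1 0 = a" "\<gamma>2 0 = b \<star> a" "a \<noteq> 0"
    and "round_circle S \<or> straight_line S" "\<And>t. t \<in> T \<Longrightarrow> \<gamma> t \<in> S"
  shows "quat_is_real (D - (3/2) *\<^sub>R (b \<star> b))"
  using \<open>round_circle S \<or> straight_line S\<close>
proof
  assume "round_circle S"
  then obtain L :: "quat \<Rightarrow> quat" and u v r c where "linear L"
    and plane: "\<And>z. L z = 0 \<Longrightarrow> z \<in> span {u, v}" and "r > 0"
    and in_plane: "\<And>y. y \<in> S \<Longrightarrow> L (y - c) = 0"
    and on_sphere: "\<And>y. y \<in> S \<Longrightarrow> (y - c) \<bullet> (y - c) = r"
    by (metis round_circle_in_span_and_sphere)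
  have on_curve: "L (\<gamma> t - c) = 0" "(\<gamma> t - c) \<bullet> (\<gamma> t - c) = r" if "t \<in> T" for t
    using in_plane on_sphere assms(10) that by blast+
  note kernel = linear_vanishes_on_curve_derivatives[OF T d1 d2 d3 \<open>linear L\<close> on_curve(1)]
    and sphere = curve_on_sphere_derivatives[OF T d1 d2 d3 on_curve(2)]
  have "{\<gamma> 0 - c, a, b \<star> a, D \<star> a} \<subseteq> span {u, v}"
    using plane kernel on_curve(1)[OF T(2)] assms(6,7) by auto
  moreover have "\<gamma> 0 - c \<noteq> 0"
    using on_curve(2)[OF T(2)] \<open>r > 0\<close> by auto
  ultimately show ?thesis
    using sphere assms(6-8)
    by (intro quat_is_real_Schwarzian_form_circle[where p = "\<gamma> 0 - c"]) auto
next
  assume "straight_line S"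
  then obtain L :: "quat \<Rightarrow> quat" and d c where "linear L"
    and line: "\<And>z. L z = 0 \<Longrightarrow> z \<in> span {d}" and in_line: "\<And>y. y \<in> S \<Longrightarrow> L (y - c) = 0"
    by (metis straight_line_in_span)
  have "L (\<gamma> t - c) = 0" if "t \<in> T" for t
    using in_line assms(10) that by blast
  note kernel = linear_vanishes_on_curve_derivatives[OF T d1 d2 d3 \<open>linear L\<close> this]
  have "{a, b \<star> a, D \<star> a} \<subseteq> span {d}"
    using line kernel assms(6,7) by auto
  then show ?thesis
    using \<open>a \<noteq> 0\<close> by (rule quat_is_real_Schwarzian_form_line)
qed

lemma has_vector_derivative_along_line:
  assumes "g differentiable at (x + t *\<^sub>R v)"
  shows "((\<lambda>t. g (x + t *\<^sub>R v)) has_vector_derivative dderiv g v (x + t *\<^sub>R v)) (at t)"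
proof -
  let ?G = "frechet_derivative g (at (x + t *\<^sub>R v))"
  have G: "(g has_derivative ?G) (at (x + t *\<^sub>R v))"
    using assms frechet_derivative_works by blast
  have "((\<lambda>t. x + t *\<^sub>R v) has_derivative (\<lambda>h. h *\<^sub>R v)) (at t)"
    by (auto intro!: derivative_eq_intros)
  from diff_chain_at[OF this G] show ?thesis
    using has_derivative_linear[OF G]
    by (simp add: has_vector_derivative_def dderiv_def o_def linear_cmul)
qed

lemma maps_segments_to_circles_along_line:
  assumes "open U" "x \<in> U" "maps_segments_to_circles U f"
  obtains T S where "open T" "0 \<in> T" "\<And>t. t \<in> T \<Longrightarrow> x + t *\<^sub>R v \<in> U"
    "round_circle S \<or> straight_line S" "\<And>t. t \<in> T \<Longrightarrow> f (x + t *\<^sub>R v) \<in> S"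
proof -
  obtain e where "e > 0" and "ball x e \<subseteq> U"
    using assms(1,2) open_contains_ball by blast
  define \<epsilon> where "\<epsilon> = e / (norm v + 1)"
  have "norm v + 1 > 0"
    using norm_ge_zero[of v] by linarith
  then have "\<epsilon> > 0" and "\<epsilon> * norm v < e"
    using \<open>e > 0\<close> by (simp_all add: \<epsilon>_def field_simps)
  define seg where "seg = closed_segment (x - \<epsilon> *\<^sub>R v) (x + \<epsilon> *\<^sub>R v)"
  have "seg \<subseteq> ball x e"
    unfolding seg_def using \<open>\<epsilon> > 0\<close> \<open>\<epsilon> * norm v < e\<close>
    by (intro closed_segment_subset convex_ball) (simp_all add: dist_norm)
  then obtain S where S: "round_circle S \<or> straight_line S" and "f ` seg \<subseteq> S"
    using assms(3) \<open>ball x e \<subseteq> U\<close> unfolding maps_segments_to_circles_def seg_def by blast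
  have on_seg: "x + t *\<^sub>R v \<in> seg" if "t \<in> ball 0 \<epsilon>" for t
  proof -
    define u where "u = (t + \<epsilon>) / (2 * \<epsilon>)"
    have "0 \<le> u" and "u \<le> 1"
      using that \<open>\<epsilon> > 0\<close> by (auto simp: u_def field_simps)
    have "(1 - u) *\<^sub>R (x - \<epsilon> *\<^sub>R v) + u *\<^sub>R (x + \<epsilon> *\<^sub>R v) = x + ((2 * u - 1) * \<epsilon>) *\<^sub>R v"
      by (simp add: vec_eq_iff algebra_simps)
    also have "(2 * u - 1) * \<epsilon> = t"
      using \<open>\<epsilon> > 0\<close> by (simp add: u_def field_simps)
    finally show ?thesis
      unfolding seg_def in_segment using \<open>0 \<le> u\<close> \<open>u \<le> 1\<close> by metis
  qed
  show ?thesis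
  proof
    show "x + t *\<^sub>R v \<in> U" if "t \<in> ball 0 \<epsilon>" for t
      using on_seg[OF that] \<open>seg \<subseteq> ball x e\<close> \<open>ball x e \<subseteq> U\<close> by blast
    show "f (x + t *\<^sub>R v) \<in> S" if "t \<in> ball 0 \<epsilon>" for t
      using on_seg[OF that] \<open>f ` seg \<subseteq> S\<close> by blast
  qed (use S \<open>\<epsilon> > 0\<close> in auto)
qed

lemma smooth_on_differentiable_at:
  assumes "smooth_on U g" "open U" "x \<in> U"
  shows "g differentiable at x"
proof -
  have "Ck_on (Suc 0) U g"
    using assms(1) unfolding smooth_on_def by blast
  then show ?thesis
    using assms(2,3) differentiable_on_eq_differentiable_at by auto
qed

lemma smooth_on_dderiv:
  assumes "smooth_on U g"
  shows "smooth_on U (dderiv g v)"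
  unfolding smooth_on_def
proof
  fix k
  have "Ck_on (Suc k) U g"
    using assms unfolding smooth_on_def by blast
  then show "Ck_on k U (dderiv g v)"
    by simp
qed

lemma smooth_diffeo_dderiv_nonzero:
  assumes "open U" "x \<in> U" "smooth_diffeo_onto_open U f"
  obtains v where "dderiv f v x \<noteq> 0"
proof -
  obtain g where "smooth_on U f" "open (f ` U)" "smooth_on (f ` U) g"
    and inverse: "\<And>y. y \<in> U \<Longrightarrow> g (f y) = y"
    using assms(3) unfolding smooth_diffeo_onto_open_def by blast
  obtain F where F: "(f has_derivative F) (at x)"
    using smooth_on_differentiable_at[OF \<open>smooth_on U f\<close> assms(1,2)] differentiable_def by blast
  obtain G where G: "(g has_derivative G) (at (f x))"
    using smooth_on_differentiable_at[OF \<open>smooth_on (f ` U) g\<close> \<open>open (f ` U)\<close>] assms(2)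
    unfolding differentiable_def by blast
  have "((g \<circ> f) has_derivative G \<circ> F) (at x)"
    using F G by (rule diff_chain_at)
  moreover have "((g \<circ> f) has_derivative id) (at x)"
    using has_derivative_id assms(1,2)
    by (rule has_derivative_transform_within_open) (simp add: inverse)
  ultimately have "G \<circ> F = id"
    by (rule has_derivative_unique)
  have "F \<noteq> (\<lambda>_. 0)"
  proof
    assume "F = (\<lambda>_. 0)"
    then have "id = (\<lambda>_ :: quat. 0 :: quat)"
      using \<open>G \<circ> F = id\<close> linear_0[OF has_derivative_linear[OF G]] by auto
    then have "axis 1 1 = (0 :: quat)"
      by (metis id_apply)
    then show False
      by (simp add: axis_eq_0_iff)
  qed
  moreover have "F = frechet_derivative f (at x)"
    using F frechet_derivative_at by blast
  ultimately show ?thesis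
    using that unfolding dderiv_def by fastforce
qed

lemma quat_is_real_Schwarzian_form_along_line:
  fixes f B\<^sub>v :: "quat \<Rightarrow> quat"
  assumes "open U" "x \<in> U" "maps_segments_to_circles U f"
    and f: "\<And>y. y \<in> U \<Longrightarrow> f differentiable at y"
    and A: "\<And>y. y \<in> U \<Longrightarrow> dderiv f v differentiable at y"
    and B: "B\<^sub>v differentiable at x"
    and second: "\<And>y. y \<in> U \<Longrightarrow> dderiv (dderiv f v) v y = B\<^sub>v y \<star> dderiv f v y"
    and "dderiv f v x \<noteq> 0"
  shows "quat_is_real (dderiv B\<^sub>v v x - (1/2) *\<^sub>R (B\<^sub>v x \<star> B\<^sub>v x))"
proof -
  obtain T S where T: "open T" "0 \<in> T" and in_U: "\<And>t. t \<in> T \<Longrightarrow> x + t *\<^sub>R v \<in> U"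
    and S: "round_circle S \<or> straight_line S" "\<And>t. t \<in> T \<Longrightarrow> f (x + t *\<^sub>R v) \<in> S"
    using maps_segments_to_circles_along_line[OF assms(1-3)] by metis
  define a b d where "a = dderiv f v x" and "b = B\<^sub>v x" and "d = dderiv B\<^sub>v v x"
  define \<gamma>1 where "\<gamma>1 = (\<lambda>t. dderiv f v (x + t *\<^sub>R v))"
  define \<gamma>2 where "\<gamma>2 = (\<lambda>t. B\<^sub>v (x + t *\<^sub>R v) \<star> \<gamma>1 t)"
  have d1: "((\<lambda>t. f (x + t *\<^sub>R v)) has_vector_derivative \<gamma>1 t) (at t)" if "t \<in> T" for t
    using f[OF in_U[OF that]] unfolding \<gamma>1_def by (rule has_vector_derivative_along_line)
  have d2: "(\<gamma>1 has_vector_derivative \<gamma>2 t) (at t)" if "t \<in> T" for t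
    using has_vector_derivative_along_line[OF A[OF in_U[OF that]]] second[OF in_U[OF that]]
    by (simp add: \<gamma>1_def \<gamma>2_def)
  have "((\<lambda>t. B\<^sub>v (x + t *\<^sub>R v)) has_vector_derivative d) (at 0)"
    using has_vector_derivative_along_line[of B\<^sub>v x 0 v] B by (simp add: d_def)
  from bounded_bilinear.has_vector_derivative[OF bounded_bilinear_qmult this d2[OF T(2)]]
  have d3: "(\<gamma>2 has_vector_derivative (d + b \<star> b) \<star> a) (at 0)"
    by (simp add: \<gamma>2_def \<gamma>1_def a_def b_def qmult_add_left qmult_assoc add.commute)
  have "\<gamma>1 0 = a" "\<gamma>2 0 = b \<star> a" "a \<noteq> 0"
    using \<open>dderiv f v x \<noteq> 0\<close> by (simp_all add: \<gamma>1_def \<gamma>2_def a_def b_def)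
  from quat_is_real_Schwarzian_form_of_curve[OF T d1 d2 d3 this S]
  have "quat_is_real ((d + b \<star> b) - (3/2) *\<^sub>R (b \<star> b))" .
  also have "(d + b \<star> b) - (3/2) *\<^sub>R (b \<star> b) = d - (1/2) *\<^sub>R (b \<star> b)"
    by (simp add: quat_eq_iff del: quat_components_qmult)
  finally show ?thesis
    by (simp only: b_def d_def)
qed

theorem mainTheorem4:
  fixes U :: "quat set" and f :: "quat \<Rightarrow> quat"
    and B :: "quat \<Rightarrow> quat \<Rightarrow> quat" and C :: "quat \<Rightarrow> quat"
  assumes "open U"
    and "smooth_diffeo_onto_open U f"
    and "maps_segments_to_circles U f"
    and "\<forall>x\<in>U. linear (B x)"
    and "\<forall>\<alpha>. smooth_on U (\<lambda>x. B x \<alpha>)"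
    and "\<forall>x\<in>U. \<forall>\<alpha>. dderiv (\<lambda>y. dderiv f \<alpha> y) \<alpha> x = B x \<alpha> \<star> dderiv f \<alpha> x"
    and "\<forall>x\<in>U. \<forall>\<alpha> \<beta>.
           dderiv (\<lambda>y. B y \<beta>) \<alpha> x - (1/2) *\<^sub>R (B x \<alpha> \<star> B x \<beta>)
           = (1/3) *\<^sub>R (C x \<star> (qconj (dderiv f \<alpha> x) \<star> dderiv f \<beta> x
                              + qconj (dderiv f \<beta> x) \<star> dderiv f \<alpha> x
                              + dderiv f \<alpha> x \<star> qconj (dderiv f \<beta> x)))"
  shows "\<forall>x\<in>U. quat_is_real (C x)"
proof
  fix x assume "x \<in> U"
  have "smooth_on U f"
    using assms(2) unfolding smooth_diffeo_onto_open_def by blast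
  obtain \<alpha> where a: "dderiv f \<alpha> x \<noteq> 0"
    using smooth_diffeo_dderiv_nonzero[OF assms(1) \<open>x \<in> U\<close> assms(2)] .
  have "quat_is_real (dderiv (\<lambda>y. B y \<alpha>) \<alpha> x - (1/2) *\<^sub>R (B x \<alpha> \<star> B x \<alpha>))"
    using assms(1,3,5,6) \<open>x \<in> U\<close> a \<open>smooth_on U f\<close>
    by (intro quat_is_real_Schwarzian_form_along_line)
      (auto intro: smooth_on_differentiable_at smooth_on_dderiv)
  also have "\<dots> = (dderiv f \<alpha> x \<bullet> dderiv f \<alpha> x) *\<^sub>R C x"
    using assms(7) \<open>x \<in> U\<close> qconj_symmetrization_diagonal by metis
  finally show "quat_is_real (C x)"
    using a by (simp add: quat_is_real_def)
qed

end
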